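(* Let $(Q,\rightarrow)$ be a finite transition system, $\mathscr{R}$ a preorder on $Q$ and $\mathscr{P}\subseteq\mathscr{R}$ an equivalence relation with a representative $E.\mathrm{rep}\in E$ fixed for each block $E$ of $\mathscr{P}$, such that there is no $(\mathscr{P},\mathscr{R})$-splitter transition of type 1 and no $(\mathscr{P},\mathscr{R})$-splitter transition of type 2. Then $\mathscr{P}$ is $\mathscr{R}$-block-stable.
   Context: A preorder is a reflexive transitive relation; its blocks are $[q]_{\mathscr{R}}=\{q'\mid q\,\mathscr{R}\,q'\wedge q'\,\mathscr{R}\,q\}$. $\mathscr{R}(X)=\{q'\mid\exists q\in X.\ q\,\mathscr{R}\,q'\}$, $\rightarrow^{-1}(Y)=\{q\mid\exists y\in Y.\ q\rightarrow y\}$; for sets, $X\rightarrow Y$ means some $x\in X,y\in Y$ have $x\rightarrow y$, and $X\,\mathscr{R}\,Y$ means $(X\times Y)\cap\mathscr{R}\neq\emptyset$. For a block $E$ of $\mathscr{P}$ and a block $B$ of $\mathscr{R}$, $\mathrm{RelCount}_{(\mathscr{P},\mathscr{R})}(E,B)=|\{E'\text{ block of }\mathscr{P}\mid E.\mathrm{rep}\rightarrow E'\wedge B\,\mathscr{R}\,E'\}|$. A splitter transition of type 1 is a pair ($E$ block of $\mathscr{P}$, $B$ block of $\mathscr{R}$) with $E\rightarrow B$ and $\mathrm{RelCount}_{(\mathscr{P},\mathscr{R})}(E,B)=0$. A splitter transition of type 2 is a pair ($E$, $B$) with $E.\mathrm{rep}\rightarrow B$, $\mathrm{RelCount}_{(\mathscr{P},\mathscr{R})}(E,B)=|\{[b]_{\mathscr{P}}\subseteq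 B\mid E.\mathrm{rep}\rightarrow b\}|$ and $E\not\subseteq\rightarrow^{-1}(B)$. $\mathscr{P}$ is $\mathscr{R}$-block-stable if for all $b,d,d'$ with $d\,\mathscr{P}\,d'$: $d\in\rightarrow^{-1}(\mathscr{R}(b))\iff d'\in\rightarrow^{-1}(\mathscr{R}(b))$. *)

theory Defs
  imports Main
begin

definition blk :: "('a \<times> 'a) set \<Rightarrow> 'a \<Rightarrow> 'a set" where
  "blk R q = {q'. (q, q') \<in> R \<and> (q', q) \<in> R}"

definition blocks :: "'a set \<Rightarrow> ('a \<times> 'a) set \<Rightarrow> 'a set set" where
  "blocks Q R = blk R ` Q"

definition preimg :: "('a \<times> 'a) set \<Rightarrow> 'a set \<Rightarrow> 'a set" where
  "preimg T Y = {q. \<exists>y\<in>Y. (q, y) \<in> T}"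

definition set_trans :: "('a \<times> 'a) set \<Rightarrow> 'a set \<Rightarrow> 'a set \<Rightarrow> bool" where
  "set_trans T X Y \<longleftrightarrow> (\<exists>x\<in>X. \<exists>y\<in>Y. (x, y) \<in> T)"

definition set_rel :: "('a \<times> 'a) set \<Rightarrow> 'a set \<Rightarrow> 'a set \<Rightarrow> bool" where
  "set_rel R X Y \<longleftrightarrow> (X \<times> Y) \<inter> R \<noteq> {}"

definition RelCount :: "'a set \<Rightarrow> ('a \<times> 'a) set \<Rightarrow> ('a \<times> 'a) set \<Rightarrow> ('a \<times> 'a) set
    \<Rightarrow> ('a set \<Rightarrow> 'a) \<Rightarrow> 'a set \<Rightarrow> 'a set \<Rightarrow> nat" where
  "RelCount Q T P R rep E B =
     card {E' \<in> blocks Q P. set_trans T {rep E} E' \<and> set_rel R B E'}"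

definition splitter1 :: "'a set \<Rightarrow> ('a \<times> 'a) set \<Rightarrow> ('a \<times> 'a) set \<Rightarrow> ('a \<times> 'a) set
    \<Rightarrow> ('a set \<Rightarrow> 'a) \<Rightarrow> 'a set \<Rightarrow> 'a set \<Rightarrow> bool" where
  "splitter1 Q T P R rep E B \<longleftrightarrow>
     E \<in> blocks Q P \<and> B \<in> blocks Q R \<and> set_trans T E B \<and> RelCount Q T P R rep E B = 0"

definition splitter2 :: "'a set \<Rightarrow> ('a \<times> 'a) set \<Rightarrow> ('a \<times> 'a) set \<Rightarrow> ('a \<times> 'a) set
    \<Rightarrow> ('a set \<Rightarrow> 'a) \<Rightarrow> 'a set \<Rightarrow> 'a set \<Rightarrow> bool" where
  "splitter2 Q T P R rep E B \<longleftrightarrow>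
     E \<in> blocks Q P \<and> B \<in> blocks Q R \<and> set_trans T {rep E} B \<and>
     RelCount Q T P R rep E B = card {C. \<exists>b. C = blk P b \<and> C \<subseteq> B \<and> (rep E, b) \<in> T} \<and>
     \<not> E \<subseteq> preimg T B"

definition block_stable :: "'a set \<Rightarrow> ('a \<times> 'a) set \<Rightarrow> ('a \<times> 'a) set \<Rightarrow> ('a \<times> 'a) set \<Rightarrow> bool" where
  "block_stable Q T P R \<longleftrightarrow>
     (\<forall>b\<in>Q. \<forall>d\<in>Q. \<forall>d'\<in>Q. (d, d') \<in> P \<longrightarrow>
        (d \<in> preimg T (R `` {b}) \<longleftrightarrow> d' \<in> preimg T (R `` {b})))"

end

theory Submission
  imports Defs
begin

text \<open>Let \<open>E\<close> be a \<open>P\<close>-block containing \<open>e\<^sub>1, e\<^sub>2\<close> and let \<open>e\<^sub>1 \<rightarrow> x\<close>. Since \<open>(E, [x]\<^sub>R)\<close> is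
  not a splitter of type 1, \<open>E.rep\<close> has a successor \<open>y\<close> above \<open>x\<close>. Choose a successor \<open>z\<close> of
  \<open>E.rep\<close> above \<open>y\<close> that is \<open>R\<close>-maximal among all successors of \<open>E.rep\<close>. By maximality, every
  \<open>P\<close>-block reached from \<open>E.rep\<close> and lying \<open>R\<close>-above \<open>[z]\<^sub>R\<close> is contained in \<open>[z]\<^sub>R\<close>, so the
  counting condition of a type-2 splitter holds for \<open>(E, [z]\<^sub>R)\<close>. As there is no such splitter,
  \<open>e\<^sub>2\<close> has a successor in \<open>[z]\<^sub>R\<close>, which lies above \<open>x\<close>. The argument never uses
  \<open>E.rep \<in> E\<close>.\<close>

lemma blk_self: "refl_on Q R \<Longrightarrow> q \<in> Q \<Longrightarrow> q \<in> blk R q"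
  unfolding blk_def by (blast dest: refl_onD)

lemma mem_blk_related: "trans P \<Longrightarrow> x \<in> blk P q \<Longrightarrow> y \<in> blk P q \<Longrightarrow> (x, y) \<in> P"
  unfolding blk_def by (blast dest: transD)

lemma preorder_on_finite_has_maximal_above:
  assumes "finite Q" and "preorder_on Q R" and "S \<subseteq> Q" and "y \<in> S"
  obtains z where "z \<in> S" "(y, z) \<in> R" "\<And>w. w \<in> S \<Longrightarrow> (z, w) \<in> R \<Longrightarrow> (w, z) \<in> R"
proof -
  have R: "R \<subseteq> Q \<times> Q" "refl_on Q R" "trans R"
    using assms(2) unfolding preorder_on_def by auto
  have "\<exists>z. (z \<in> S \<and> (y, z) \<in> R) \<and>
      (\<forall>w. w \<in> S \<and> (y, w) \<in> R \<longrightarrow> card (R `` {z}) \<le> card (R `` {w}))"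
    by (rule ex_has_least_nat) (use R(2) assms(3,4) in \<open>blast dest: refl_onD\<close>)
  then obtain z where z: "z \<in> S" "(y, z) \<in> R"
    and least: "\<And>w. w \<in> S \<Longrightarrow> (y, w) \<in> R \<Longrightarrow> card (R `` {z}) \<le> card (R `` {w})"
    by blast
  have "(w, z) \<in> R" if w: "w \<in> S" "(z, w) \<in> R" for w
  proof -
    \<comment> \<open>the up-set of \<open>w\<close> is contained in that of \<open>z\<close> but is not smaller, so they coincide\<close>
    have sub: "R `` {w} \<subseteq> R `` {z}" using w(2) R(3) by (blast dest: transD)
    have "R `` {z} \<subseteq> Q" using R(1) by blast
    then have fin: "finite (R `` {z})" using assms(1) by (rule finite_subset)
    have "(y, w) \<in> R" using z(2) w(2) R(3) by (rule transD[rotated])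
    then have "card (R `` {z}) \<le> card (R `` {w})" using least w(1) by blast
    then have "R `` {w} = R `` {z}"
      using card_mono[OF fin sub] by (intro card_subset_eq[OF fin sub]) linarith
    moreover have "(z, z) \<in> R" using R(2) z(1) assms(3) by (blast dest: refl_onD)
    ultimately show ?thesis by blast
  qed
  with z that show ?thesis by blast
qed

lemma related_block_successor_above:
  assumes "trans P" and "P \<subseteq> R" and "trans R"
    and "E' \<in> blocks Q P" and "set_trans T {r} E'" and "set_rel R (blk R x) E'"
  obtains y where "(r, y) \<in> T" "y \<in> E'" "(x, y) \<in> R"
proof -
  obtain q where q: "E' = blk P q" using assms(4) unfolding blocks_def by blast
  obtain y where y: "(r, y) \<in> T" "y \<in> E'" using assms(5) unfolding set_trans_def by blast
  obtain b e where be: "b \<in> blk R x" "e \<in> E'" "(b, e) \<in> R"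
    using assms(6) unfolding set_rel_def by blast
  have "(e, y) \<in> R" using mem_blk_related[OF assms(1)] be(2) y(2) q assms(2) by blast
  moreover have "(x, b) \<in> R" using be(1) unfolding blk_def by blast
  ultimately have "(x, y) \<in> R" using be(3) assms(3) by (blast dest: transD)
  with y that show ?thesis by blast
qed

lemma no_splitter1_successor_above:
  assumes "preorder_on Q R" and "equiv Q P" and "P \<subseteq> R"
    and "\<not> splitter1 Q T P R rep E (blk R x)"
    and "E \<in> blocks Q P" and "e \<in> E" and "(e, x) \<in> T" and "x \<in> Q"
  obtains y where "(rep E, y) \<in> T" "(x, y) \<in> R"
proof -
  have R: "refl_on Q R" "trans R" and "trans P"
    using assms(1,2) unfolding preorder_on_def equiv_def by auto
  have "blk R x \<in> blocks Q R" using assms(8) unfolding blocks_def by blast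
  moreover have "set_trans T E (blk R x)"
    using assms(6,7,8) blk_self[OF R(1)] unfolding set_trans_def by blast
  ultimately have "RelCount Q T P R rep E (blk R x) \<noteq> 0"
    using assms(4,5) unfolding splitter1_def by auto
  then obtain E' where "E' \<in> blocks Q P" "set_trans T {rep E} E'" "set_rel R (blk R x) E'"
    unfolding RelCount_def by (metis (no_types, lifting) card.empty empty_Collect_eq)
  with related_block_successor_above[OF \<open>trans P\<close> assms(3) R(2)] that show ?thesis by blast
qed

lemma maximal_successor_related_blocks_eq:
  assumes "preorder_on Q R" and "equiv Q P" and "P \<subseteq> R" and "T \<subseteq> Q \<times> Q"
    and "z \<in> T `` {r}" and max: "\<And>w. w \<in> T `` {r} \<Longrightarrow> (z, w) \<in> R \<Longrightarrow> (w, z) \<in> R"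
  shows "{E' \<in> blocks Q P. set_trans T {r} E' \<and> set_rel R (blk R z) E'}
       = {C. \<exists>b. C = blk P b \<and> C \<subseteq> blk R z \<and> (r, b) \<in> T}"
proof (intro equalityI subsetI)
  have R: "refl_on Q R" "trans R" and P: "refl_on Q P" "sym P" "trans P"
    using assms(1,2) unfolding preorder_on_def equiv_def by auto
  {
    fix E' assume E': "E' \<in> {E' \<in> blocks Q P. set_trans T {r} E' \<and> set_rel R (blk R z) E'}"
    then obtain y where y: "(r, y) \<in> T" "y \<in> E'" "(z, y) \<in> R"
      using related_block_successor_above[OF P(3) assms(3) R(2)] by blast
    obtain q where q: "E' = blk P q" using E' unfolding blocks_def by blast
    have "E' = blk P y"
      using y(2) q P(2,3) unfolding blk_def by (blast dest: symD transD)
    moreover have "blk P y \<subseteq> blk R z"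
      using max[OF _ y(3)] y(1,3) assms(3) R(2) unfolding blk_def by (blast dest: transD)
    ultimately show "E' \<in> {C. \<exists>b. C = blk P b \<and> C \<subseteq> blk R z \<and> (r, b) \<in> T}"
      using y(1) by blast
  }
  fix C assume "C \<in> {C. \<exists>b. C = blk P b \<and> C \<subseteq> blk R z \<and> (r, b) \<in> T}"
  then obtain b where C: "C = blk P b" "C \<subseteq> blk R z" "(r, b) \<in> T" by blast
  have "b \<in> Q" using C(3) assms(4) by blast
  then have "b \<in> C" "(b, b) \<in> R" using C(1) blk_self[OF P(1)] R(1) by (auto dest: refl_onD)
  then show "C \<in> {E' \<in> blocks Q P. set_trans T {r} E' \<and> set_rel R (blk R z) E'}"
    using C \<open>b \<in> Q\<close> unfolding blocks_def set_trans_def set_rel_def by blast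
qed

lemma no_splitters_successor_transfer:
  assumes "finite Q" and "T \<subseteq> Q \<times> Q" and "preorder_on Q R" and "equiv Q P" and "P \<subseteq> R"
    and "\<not> (\<exists>E B. splitter1 Q T P R rep E B)" and "\<not> (\<exists>E B. splitter2 Q T P R rep E B)"
    and "E \<in> blocks Q P" and "e\<^sub>1 \<in> E" and "e\<^sub>2 \<in> E" and "(e\<^sub>1, x) \<in> T"
  obtains w where "(e\<^sub>2, w) \<in> T" "(x, w) \<in> R"
proof -
  have R: "refl_on Q R" "trans R" using assms(3) unfolding preorder_on_def by auto
  have "x \<in> Q" using assms(2,11) by blast
  then obtain y where y: "(rep E, y) \<in> T" "(x, y) \<in> R"
    using no_splitter1_successor_above[OF assms(3,4,5) _ assms(8,9,11)] assms(6) by blast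
  have succ_Q: "T `` {rep E} \<subseteq> Q" using assms(2) by blast
  have "y \<in> T `` {rep E}" using y(1) by blast
  with preorder_on_finite_has_maximal_above[OF assms(1,3) succ_Q]
  obtain z where z: "z \<in> T `` {rep E}" "(y, z) \<in> R"
    and max: "\<And>w. w \<in> T `` {rep E} \<Longrightarrow> (z, w) \<in> R \<Longrightarrow> (w, z) \<in> R"
    by metis
  have "z \<in> Q" using z(1) assms(2) by blast
  have "blk R z \<in> blocks Q R" using \<open>z \<in> Q\<close> unfolding blocks_def by blast
  moreover have "set_trans T {rep E} (blk R z)"
    using z(1) blk_self[OF R(1) \<open>z \<in> Q\<close>] unfolding set_trans_def by blast
  moreover have "RelCount Q T P R rep E (blk R z)
      = card {C. \<exists>b. C = blk P b \<and> C \<subseteq> blk R z \<and> (rep E, b) \<in> T}"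
    using maximal_successor_related_blocks_eq[OF assms(3,4,5,2) z(1) max]
    unfolding RelCount_def by (rule arg_cong)
  ultimately have "E \<subseteq> preimg T (blk R z)"
    using assms(7,8) unfolding splitter2_def by blast
  then obtain w where w: "(e\<^sub>2, w) \<in> T" "(z, w) \<in> R"
    using assms(10) unfolding preimg_def blk_def by blast
  have "(x, w) \<in> R" using y(2) z(2) w(2) R(2) by (blast dest: transD)
  with w(1) that show ?thesis by blast
qed

theorem theorem2:
  fixes Q :: "'a set" and T P R :: "('a \<times> 'a) set" and rep :: "'a set \<Rightarrow> 'a"
  assumes "finite Q"
    and "T \<subseteq> Q \<times> Q"
    and "R \<subseteq> Q \<times> Q"
    and "preorder_on Q R"
    and "equiv Q P"
    and "P \<subseteq> R"
    and "\<forall>E \<in> Q // P. rep E \<in> E"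
    and "\<not> (\<exists>E B. splitter1 Q T P R rep E B)"
    and "\<not> (\<exists>E B. splitter2 Q T P R rep E B)"
  shows "block_stable Q T P R"
proof -
  have trans_R: "trans R" and P: "refl_on Q P" "sym P"
    using assms(4,5) unfolding preorder_on_def equiv_def by auto
  have transfer: "d' \<in> preimg T (R `` {b})"
    if d: "d \<in> Q" "(d, d') \<in> P" and "d \<in> preimg T (R `` {b})" for b d d'
  proof -
    obtain x where x: "(d, x) \<in> T" "(b, x) \<in> R"
      using \<open>d \<in> preimg T (R `` {b})\<close> unfolding preimg_def by blast
    have "blk P d \<in> blocks Q P" using \<open>d \<in> Q\<close> unfolding blocks_def by blast
    moreover have "d \<in> blk P d" "d' \<in> blk P d"
      using d P unfolding blk_def by (auto dest: refl_onD symD)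
    ultimately obtain w where "(d', w) \<in> T" "(x, w) \<in> R"
      using no_splitters_successor_transfer[OF assms(1,2,4,5,6,8,9)] x(1) by blast
    with x(2) trans_R show ?thesis unfolding preimg_def by (blast dest: transD)
  qed
  show ?thesis
    unfolding block_stable_def using transfer P(2) by (blast dest: symD)
qed

end
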